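(* Let $r\geq 2$ be an integer and let $b$ be a real number with $b\leq (r-1)^{r-1}$. Then every coefficient of the power series expansion of $\dfrac{1}{1-rt+bt^r}$ in $t$ around $t=0$ is strictly positive. *)

theory Defs
  imports "HOL-Computational_Algebra.Formal_Power_Series"
begin

end

theory Submission
  imports Defs
begin

text \<open>
  The coefficients g(n) of 1/(1 - a t + b t^r) satisfy g(0) = 1 and the recurrence
  g(n) = a g(n-1) - b g(n-r), the last term present only for n \<ge> r. For a \<ge> 2 one shows
  by induction that g is positive and grows at least by the factor a - 1 at each step.
  Then g(n-1) \<ge> (a-1)^(r-1) g(n-r) \<ge> b g(n-r), so the subtracted term is at most g(n-1),
  whence g(n) \<ge> (a - 1) g(n-1) > 0, which propagates the induction.
\<close>

lemma geometric_growth_lower_bound: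
  fixes g :: "nat \<Rightarrow> 'a::linordered_semiring_1"
  assumes "c \<ge> 0"
    and "\<And>k. m \<le> k \<Longrightarrow> k < m + j \<Longrightarrow> c * g k \<le> g (Suc k)"
  shows "c ^ j * g m \<le> g (m + j)"
  using assms(2)
proof (induction j)
  case 0
  then show ?case by simp
next
  case (Suc j)
  then have "c ^ j * g m \<le> g (m + j)" by simp
  then have "c * (c ^ j * g m) \<le> c * g (m + j)"
    using \<open>c \<ge> 0\<close> by (rule mult_left_mono)
  also have "\<dots> \<le> g (m + Suc j)"
    using Suc.prems[of "m + j"] by simp
  finally show ?case by (simp add: mult.assoc)
qed

lemma fps_nth_inverse_trinomial_0:
  fixes a b :: "'a::field"
  assumes "r \<ge> 1"
  shows "fps_nth (inverse (1 - fps_const a * fps_X + fps_const b * fps_X ^ r)) 0 = 1"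
  using assms by simp

lemma fps_nth_inverse_trinomial_Suc:
  fixes a b :: "'a::field"
  assumes "r \<ge> 1"
  defines "g \<equiv> fps_nth (inverse (1 - fps_const a * fps_X + fps_const b * fps_X ^ r))"
  shows "g (Suc n) = a * g n - (if Suc n < r then 0 else b * g (Suc n - r))"
proof -
  define F where "F = 1 - fps_const a * fps_X + fps_const b * fps_X ^ r"
  have "F * inverse F = 1"
    using assms(1) by (intro inverse_mult_eq_1') (simp add: F_def)
  then have "fps_nth (F * inverse F) (Suc n) = 0"
    by simp
  moreover have "F * inverse F = inverse F - fps_const a * (fps_X * inverse F)
      + fps_const b * (fps_X ^ r * inverse F)"
    by (simp add: F_def algebra_simps)
  ultimately have "g (Suc n) - a * g n + (if Suc n < r then 0 else b * g (Suc n - r)) = 0"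
    by (simp add: g_def F_def fps_X_power_mult_nth split: if_splits)
  then show ?thesis
    by (simp add: algebra_simps)
qed

lemma trinomial_recurrence_positive:
  fixes g :: "nat \<Rightarrow> real" and a b :: real
  assumes "r \<ge> 1" and "a \<ge> 2" and "b \<le> (a - 1) ^ (r - 1)" and "g 0 > 0"
    and rec: "\<And>n. g (Suc n) = a * g n - (if Suc n < r then 0 else b * g (Suc n - r))"
  shows "g n > 0"
proof -
  have "(\<forall>k\<le>n. g k > 0) \<and> (\<forall>k<n. (a - 1) * g k \<le> g (Suc k))" for n
  proof (induction n)
    case 0
    then show ?case using \<open>g 0 > 0\<close> by simp
  next
    case (Suc n)
    then have pos: "\<And>k. k \<le> n \<Longrightarrow> g k > 0"
      and growth: "\<And>k. k < n \<Longrightarrow> (a - 1) * g k \<le> g (Suc k)"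
      by auto
    have subtracted_le: "b * g (Suc n - r) \<le> g n" if "r \<le> Suc n"
    proof -
      have "b * g (Suc n - r) \<le> (a - 1) ^ (r - 1) * g (Suc n - r)"
        using \<open>b \<le> _\<close> pos[of "Suc n - r"] \<open>r \<ge> 1\<close> by (simp add: mult_right_mono)
      also have "\<dots> \<le> g (Suc n - r + (r - 1))"
        using \<open>a \<ge> 2\<close> \<open>r \<ge> 1\<close> that growth
        by (intro geometric_growth_lower_bound) auto
      also have "Suc n - r + (r - 1) = n"
        using that \<open>r \<ge> 1\<close> by simp
      finally show ?thesis .
    qed
    have "(if Suc n < r then 0 else b * g (Suc n - r)) \<le> g n"
      using subtracted_le pos[of n] by auto
    then have step: "(a - 1) * g n \<le> g (Suc n)"
      unfolding rec[of n] by (simp add: algebra_simps)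
    moreover have "g n \<le> (a - 1) * g n"
      using \<open>a \<ge> 2\<close> pos[of n] by simp
    ultimately have "g (Suc n) > 0"
      using pos[of n] by linarith
    with pos growth step show ?case
      by (metis le_Suc_eq less_Suc_eq)
  qed
  then show ?thesis by blast
qed

theorem lemma2:
  fixes r :: nat and b :: real
  assumes "r \<ge> 2" and "b \<le> (real r - 1) ^ (r - 1)"
  shows "\<forall>n. fps_nth (inverse (1 - fps_const (real r) * fps_X + fps_const b * fps_X ^ r)) n > 0"
proof
  fix n
  have r: "r \<ge> 1" and a: "real r \<ge> 2"
    using \<open>r \<ge> 2\<close> by simp_all
  show "fps_nth (inverse (1 - fps_const (real r) * fps_X + fps_const b * fps_X ^ r)) n > 0"
    by (rule trinomial_recurrence_positive[OF r a \<open>b \<le> _\<close>])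
      (simp_all only: fps_nth_inverse_trinomial_0[OF r] fps_nth_inverse_trinomial_Suc[OF r]
        zero_less_one)
qed

end
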